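(* Let $V\ge 1$, let $z\in\mathbb{R}^V$ be a logit vector and $p=\mathrm{softmax}(z)$, i.e. $p_i=e^{z_i}/\sum_{k=1}^V e^{z_k}$. Partition $\{1,\dots,V\}=\mathcal{P}\sqcup\mathcal{N}$ into correct tokens $\mathcal{P}$ and incorrect tokens $\mathcal{N}$. Let $N\ge 1$ be the number of sampled rollout tokens, let $A\subseteq\mathcal{P}$ be the set of sampled correct tokens, $B\subseteq\mathcal{N}$ the set of sampled incorrect tokens, and $U=\{1,\dots,V\}\setminus(A\cup B)$ the set of unsampled tokens. Let rewards $R_c\ge 0\ge R_w$ be given and set $R_j=R_c$ for $j\in A$, $R_j=R_w$ for $j\in B$, $R_j=0$ for $j\in U$. Define $P_{\mathrm{pos}}=\sum_{i\in A}p_i$, $P_{\mathrm{neg}}=\sum_{i\in B}p_i$, $Q_{\mathrm{pos}}=\sum_{i\in\mathcal{P}}p_i$, $Q_{\mathrm{neg}}=1-Q_{\mathrm{pos}}$, $A_2=\sum_{i\in A}p_i^2$, $B_2=\sum_{i\in B}p_i^2$, $U_{\mathrm{pos},2}=\sum_{i\in U\cap\mathcal{P}}p_i^2$, $U_{\mathrm{neg},2}=\sum_{i\in U\cap\mathcal{N}}p_i^2$, and $S_R=R_cP_{\mathrm{pos}}+R_wP_{\mathrm{neg}}$. Let $\eta>0$ and consider the one-step logit update (a gradient-descent step with learning rate $\eta$ on the surrogate loss $-\frac1N\sum_{i=1}^V R_i p_i$) $$\Delta z_j=\frac{\eta}{N}\,p_j\,(R_j-S_R),\qquad j=1,\dots,V,$$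 with induced first-order probability change $\Delta p_i=\sum_{j=1}^V\frac{\partial p_i}{\partial z_j}\Delta z_j=p_i\big(\Delta z_i-\sum_{j=1}^V p_j\Delta z_j\big)$, and let $\Delta Q_{\mathrm{pos}}=\sum_{i\in\mathcal{P}}\Delta p_i$. Then $$\Delta Q_{\mathrm{pos}}=\frac{\eta}{N}\Big[(R_c-S_R)\,Q_{\mathrm{neg}}\,A_2+(S_R-R_w)\,Q_{\mathrm{pos}}\,B_2+S_R\big(Q_{\mathrm{pos}}U_{\mathrm{neg},2}-Q_{\mathrm{neg}}U_{\mathrm{pos},2}\big)\Big].$$ Moreover $A_2,B_2\ge 0$ and $S_R\in[R_w,R_c]$, so $R_c-S_R\ge0$ and $S_R-R_w\ge 0$; hence the first two terms in the bracket are nonnegative.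
   Context: This models a single reinforcement-learning-with-verifiable-rewards update at the token level: $N$ tokens are sampled from $p$, sampled correct tokens receive reward $R_c$, sampled incorrect tokens receive reward $R_w$, and unsampled tokens receive reward $0$. $\Delta Q_{\mathrm{pos}}$ is the first-order (linearized) change in the total probability mass of correct tokens. *)

theory Defs
  imports Complex_Main
begin

text \<open>Tokens are indexed by {1..V}; logits z :: nat => real (only values on {1..V} matter).\<close>

definition softmax :: "nat \<Rightarrow> (nat \<Rightarrow> real) \<Rightarrow> nat \<Rightarrow> real" where
  "softmax V z i = exp (z i) / (\<Sum>k\<in>{1..V}. exp (z k))"

definition reward :: "nat set \<Rightarrow> nat set \<Rightarrow> real \<Rightarrow> real \<Rightarrow> nat \<Rightarrow> real" where
  "reward A B Rc Rw j = (if j \<in> A then Rc else if j \<in> B then Rw else 0)"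

definition S_R :: "(nat \<Rightarrow> real) \<Rightarrow> nat set \<Rightarrow> nat set \<Rightarrow> real \<Rightarrow> real \<Rightarrow> real" where
  "S_R p A B Rc Rw = Rc * (\<Sum>i\<in>A. p i) + Rw * (\<Sum>i\<in>B. p i)"

definition delta_z :: "real \<Rightarrow> nat \<Rightarrow> (nat \<Rightarrow> real) \<Rightarrow> nat set \<Rightarrow> nat set \<Rightarrow> real \<Rightarrow> real \<Rightarrow> nat \<Rightarrow> real" where
  "delta_z \<eta> N p A B Rc Rw j = \<eta> / real N * p j * (reward A B Rc Rw j - S_R p A B Rc Rw)"

text \<open>First-order (linearized) probability change induced by a logit change dz under softmax:
  Delta p_i = sum_j (d p_i / d z_j) dz_j = p_i (dz_i - sum_j p_j dz_j).\<close>
definition delta_p :: "nat \<Rightarrow> (nat \<Rightarrow> real) \<Rightarrow> (nat \<Rightarrow> real) \<Rightarrow> nat \<Rightarrow> real" where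
  "delta_p V p dz i = p i * (dz i - (\<Sum>j\<in>{1..V}. p j * dz j))"

end

theory Submission
  imports Defs
begin

text \<open>Since the softmax Jacobian only redistributes mass, the first-order gain of the correct
  class is \<open>Q\<^sub>n\<^sub>e\<^sub>g \<Sum>\<^sub>\<P> p \<Delta>z - Q\<^sub>p\<^sub>o\<^sub>s \<Sum>\<^sub>\<N> p \<Delta>z\<close>. On each class the reward is constant on the
  sampled tokens and \<open>0\<close> on the unsampled ones, so each of these sums is a combination of the
  second moments \<open>\<Sum> p\<^sub>i\<^sup>2\<close> of the four cells of the partition. The signs hold because \<open>S\<^sub>R\<close> is a
  combination of \<open>R\<^sub>c \<ge> 0 \<ge> R\<^sub>w\<close> with nonnegative weights of total at most \<open>1\<close>.\<close>

lemma softmax_nonneg: "0 \<le> softmax V z i"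
  unfolding softmax_def by (intro divide_nonneg_nonneg sum_nonneg) auto

lemma sum_softmax:
  assumes "V \<ge> 1"
  shows "(\<Sum>i\<in>{1..V}. softmax V z i) = 1"
proof -
  have "(\<Sum>k\<in>{1..V}. exp (z k)) > 0"
    using assms by (intro sum_pos) auto
  then show ?thesis
    unfolding softmax_def by (simp add: sum_divide_distrib[symmetric])
qed

lemma sum_delta_p:
  assumes "Pset \<subseteq> {1..V}" and "(\<Sum>i\<in>{1..V}. p i) = 1"
  shows "(\<Sum>i\<in>Pset. delta_p V p dz i)
           = (1 - sum p Pset) * (\<Sum>i\<in>Pset. p i * dz i)
             - sum p Pset * (\<Sum>i\<in>{1..V} - Pset. p i * dz i)"
proof -
  have "(\<Sum>i\<in>Pset. delta_p V p dz i)
          = (\<Sum>i\<in>Pset. p i * dz i) - sum p Pset * (\<Sum>j\<in>{1..V}. p j * dz j)"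
    unfolding delta_p_def by (simp add: right_diff_distrib sum_subtractf sum_distrib_right)
  also have "(\<Sum>j\<in>{1..V}. p j * dz j)
               = (\<Sum>i\<in>Pset. p i * dz i) + (\<Sum>i\<in>{1..V} - Pset. p i * dz i)"
    using assms(1) by (simp add: sum.subset_diff)
  finally show ?thesis
    by (simp add: algebra_simps)
qed

lemma sum_mult_delta_z_const_reward:
  assumes "\<forall>j\<in>X. reward A B Rc Rw j = r"
  shows "(\<Sum>j\<in>X. p j * delta_z \<eta> N p A B Rc Rw j)
           = \<eta> / real N * (r - S_R p A B Rc Rw) * (\<Sum>j\<in>X. (p j)\<^sup>2)"
  unfolding sum_distrib_left
  using assms by (intro sum.cong) (auto simp: delta_z_def power2_eq_square)

lemma sum_mult_delta_z_class:
  assumes "finite C" and "X \<subseteq> C"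
    and "\<forall>j\<in>X. reward A B Rc Rw j = r" and "\<forall>j\<in>C - X. reward A B Rc Rw j = 0"
  shows "(\<Sum>j\<in>C. p j * delta_z \<eta> N p A B Rc Rw j)
           = \<eta> / real N * ((r - S_R p A B Rc Rw) * (\<Sum>j\<in>X. (p j)\<^sup>2)
                            - S_R p A B Rc Rw * (\<Sum>j\<in>C - X. (p j)\<^sup>2))"
  using assms sum_mult_delta_z_const_reward[OF assms(3)] sum_mult_delta_z_const_reward[OF assms(4)]
  by (simp add: sum.subset_diff[of X C] algebra_simps)

lemma S_R_bounds:
  assumes "\<forall>i. 0 \<le> p i" and "sum p A + sum p B \<le> 1" and "Rw \<le> 0" and "0 \<le> Rc"
  shows "Rw \<le> S_R p A B Rc Rw" and "S_R p A B Rc Rw \<le> Rc"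
proof -
  have a: "0 \<le> sum p A" and b: "0 \<le> sum p B"
    using assms(1) by (simp_all add: sum_nonneg)
  have "Rw * sum p B \<ge> Rw" and "Rc * sum p A \<ge> 0"
    using a b assms(2-4) mult_left_mono_neg[of "sum p B" 1 Rw] by simp_all
  then show "Rw \<le> S_R p A B Rc Rw"
    unfolding S_R_def by linarith
  have "Rc * sum p A \<le> Rc" and "Rw * sum p B \<le> 0"
    using a b assms(2-4) by (simp_all add: mult_left_le mult_nonpos_nonneg)
  then show "S_R p A B Rc Rw \<le> Rc"
    unfolding S_R_def by linarith
qed

lemma sum_le_1_subset:
  fixes p :: "'a \<Rightarrow> real"
  assumes "finite T" and "\<forall>i. 0 \<le> p i" and "sum p T = 1" and "X \<subseteq> T"
  shows "sum p X \<le> 1"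
  using assms(2,3) sum_mono2[OF assms(1,4), of p] by simp

lemma delta_Q_pos_eq:
  fixes p :: "nat \<Rightarrow> real" and Rc Rw :: real
  assumes "Pset \<union> Nset = {1..V}" and "Pset \<inter> Nset = {}"
    and "A \<subseteq> Pset" and "B \<subseteq> Nset" and "(\<Sum>i\<in>{1..V}. p i) = 1"
  defines "S \<equiv> S_R p A B Rc Rw" and "Q \<equiv> sum p Pset"
  shows "(\<Sum>i\<in>Pset. delta_p V p (delta_z \<eta> N p A B Rc Rw) i)
           = \<eta> / real N * ((Rc - S) * (1 - Q) * (\<Sum>i\<in>A. (p i)\<^sup>2) + (S - Rw) * Q * (\<Sum>i\<in>B. (p i)\<^sup>2)
               + S * (Q * (\<Sum>i\<in>Nset - B. (p i)\<^sup>2) - (1 - Q) * (\<Sum>i\<in>Pset - A. (p i)\<^sup>2)))"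
proof -
  define dz where "dz = delta_z \<eta> N p A B Rc Rw"
  have fin: "finite Pset" "finite Nset"
    using assms(1) by (metis finite_Un finite_atLeastAtMost)+
  have rewards: "\<forall>j\<in>A. reward A B Rc Rw j = Rc" "\<forall>j\<in>Pset - A. reward A B Rc Rw j = 0"
    "\<forall>j\<in>B. reward A B Rc Rw j = Rw" "\<forall>j\<in>Nset - B. reward A B Rc Rw j = 0"
    using assms(2-4) by (auto simp: reward_def)
  have "(\<Sum>i\<in>Pset. p i * dz i)
          = \<eta> / real N * ((Rc - S) * (\<Sum>i\<in>A. (p i)\<^sup>2) - S * (\<Sum>i\<in>Pset - A. (p i)\<^sup>2))"
    and "(\<Sum>i\<in>Nset. p i * dz i)
          = \<eta> / real N * ((Rw - S) * (\<Sum>i\<in>B. (p i)\<^sup>2) - S * (\<Sum>i\<in>Nset - B. (p i)\<^sup>2))"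
    unfolding S_def dz_def
    by (rule sum_mult_delta_z_class[OF fin(1) assms(3) rewards(1,2)],
        rule sum_mult_delta_z_class[OF fin(2) assms(4) rewards(3,4)])
  moreover have "{1..V} - Pset = Nset"
    using assms(1,2) by blast
  ultimately have "(\<Sum>i\<in>Pset. delta_p V p dz i)
          = (1 - Q) * (\<eta> / real N * ((Rc - S) * (\<Sum>i\<in>A. (p i)\<^sup>2) - S * (\<Sum>i\<in>Pset - A. (p i)\<^sup>2)))
            - Q * (\<eta> / real N * ((Rw - S) * (\<Sum>i\<in>B. (p i)\<^sup>2) - S * (\<Sum>i\<in>Nset - B. (p i)\<^sup>2)))"
    using sum_delta_p[OF _ assms(5), of Pset dz] assms(1) unfolding Q_def by auto
  then show ?thesis
    unfolding dz_def by (simp add: algebra_simps add_divide_distrib diff_divide_distrib)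
qed

theorem theorem1:
  fixes V N :: nat and z :: "nat \<Rightarrow> real" and Pset Nset A B :: "nat set"
    and Rc Rw \<eta> :: real
  assumes "V \<ge> 1"
    and "Pset \<union> Nset = {1..V}" and "Pset \<inter> Nset = {}"
    and "N \<ge> 1"
    and "A \<subseteq> Pset" and "B \<subseteq> Nset"
    and "Rc \<ge> 0" and "0 \<ge> Rw"
    and "\<eta> > 0"
  shows
    "let p = softmax V z;
         U = {1..V} - (A \<union> B);
         Qpos = (\<Sum>i\<in>Pset. p i);
         Qneg = 1 - Qpos;
         A2 = (\<Sum>i\<in>A. (p i)^2);
         B2 = (\<Sum>i\<in>B. (p i)^2);
         Upos2 = (\<Sum>i\<in>U \<inter> Pset. (p i)^2);
         Uneg2 = (\<Sum>i\<in>U \<inter> Nset. (p i)^2);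
         SR = S_R p A B Rc Rw;
         dz = delta_z \<eta> N p A B Rc Rw;
         dQpos = (\<Sum>i\<in>Pset. delta_p V p dz i)
     in dQpos = \<eta> / real N * ((Rc - SR) * Qneg * A2 + (SR - Rw) * Qpos * B2
                               + SR * (Qpos * Uneg2 - Qneg * Upos2))
        \<and> A2 \<ge> 0 \<and> B2 \<ge> 0 \<and> Rw \<le> SR \<and> SR \<le> Rc
        \<and> Rc - SR \<ge> 0 \<and> SR - Rw \<ge> 0
        \<and> (Rc - SR) * Qneg * A2 \<ge> 0 \<and> (SR - Rw) * Qpos * B2 \<ge> 0"
proof -
  define p where "p = softmax V z"
  define Q where "Q = sum p Pset"
  have p_nonneg: "\<forall>i. 0 \<le> p i"
    unfolding p_def by (simp add: softmax_nonneg)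
  have p_sum: "(\<Sum>i\<in>{1..V}. p i) = 1"
    unfolding p_def by (rule sum_softmax[OF assms(1)])
  have Q_bounds: "0 \<le> Q" "Q \<le> 1"
    using sum_le_1_subset[OF _ p_nonneg p_sum, of Pset] assms(2) p_nonneg
    by (auto simp: Q_def sum_nonneg)
  have "finite A" "finite B"
    using assms(2,5,6) finite_atLeastAtMost[of 1 V] by (auto intro: finite_subset)
  then have "sum p A + sum p B = sum p (A \<union> B)"
    using assms(3,5,6) by (intro sum.union_disjoint[symmetric]) auto
  also have "\<dots> \<le> 1"
    using sum_le_1_subset[OF _ p_nonneg p_sum, of "A \<union> B"] assms(2,5,6) by auto
  finally have S_bounds: "Rw \<le> S_R p A B Rc Rw" "S_R p A B Rc Rw \<le> Rc"
    using S_R_bounds[OF p_nonneg] assms(7,8) by simp_all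
  have "({1..V} - (A \<union> B)) \<inter> Pset = Pset - A" "({1..V} - (A \<union> B)) \<inter> Nset = Nset - B"
    using assms(2,3,5,6) by blast+
  then show ?thesis
    using delta_Q_pos_eq[OF assms(2,3,5,6) p_sum] Q_bounds S_bounds
    unfolding Let_def p_def[symmetric] Q_def[symmetric]
    by (simp add: sum_nonneg)
qed

end
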